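(* Let $G\le\mathcal{S}_n$ be a $2$-homogeneous group such that the setwise stabiliser in $G$ of a $2$-subset of $\Omega$ is transitive on the remaining $n-2$ points. Then the stabiliser in $G$ of a point $p$ is transitive on the $2$-subsets of $\Omega$ not containing $p$.
   Context: $\Omega=\{1,\ldots,n\}$; $G$ is $2$-homogeneous if it is transitive on the $2$-element subsets of $\Omega$. *)

theory Defs
  imports "HOL-Algebra.Sym_Groups"
begin

definition two_subsets :: "nat set \<Rightarrow> nat set set" where
  "two_subsets X = {A. A \<subseteq> X \<and> card A = 2}"

definition two_homogeneous :: "nat \<Rightarrow> (nat \<Rightarrow> nat) set \<Rightarrow> bool" where
  "two_homogeneous n G \<longleftrightarrow>
     (\<forall>A \<in> two_subsets {1..n}. \<forall>B \<in> two_subsets {1..n}. \<exists>g \<in> G. g ` A = B)"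

end

theory Submission
  imports Defs
begin

text \<open>Given 2-subsets A and B avoiding p, 2-homogeneity gives h \<in> G with h A = B. Then h p
  lies outside B, so an element k of the setwise stabiliser of B sends h p back to p, and
  k \<circ> h fixes p and maps A onto B.\<close>

lemma two_subsets_mono: "X \<subseteq> Y \<Longrightarrow> two_subsets X \<subseteq> two_subsets Y"
  unfolding two_subsets_def by auto

lemma sym_subgroup_permutes:
  assumes "subgroup G (sym_group n)" and "g \<in> G"
  shows "g permutes {1..n}"
  using subgroup.subset[OF assms(1)] assms(2) by (auto simp: sym_group_carrier)

lemma sym_subgroup_comp_closed:
  assumes "subgroup G (sym_group n)" and "k \<in> G" and "h \<in> G"
  shows "k \<circ> h \<in> G"
  using subgroup.m_closed[OF assms] by (simp add: sym_group_mult)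

lemma permutes_image_notin:
  assumes "h permutes S" and "p \<notin> A"
  shows "h p \<notin> h ` A"
  using permutes_inj[OF assms(1)] assms(2) by (auto simp: inj_eq)

theorem corollary3p3:
  fixes n :: nat and G :: "(nat \<Rightarrow> nat) set"
  assumes "subgroup G (sym_group n)"
    and "two_homogeneous n G"
    and "\<forall>A \<in> two_subsets {1..n}. \<forall>x \<in> {1..n} - A. \<forall>y \<in> {1..n} - A.
           \<exists>g \<in> G. g ` A = A \<and> g x = y"
    and "p \<in> {1..n}"
  shows "\<forall>A \<in> two_subsets ({1..n} - {p}). \<forall>B \<in> two_subsets ({1..n} - {p}).
           \<exists>g \<in> G. g p = p \<and> g ` A = B"
proof (intro ballI)
  fix A B
  assume A: "A \<in> two_subsets ({1..n} - {p})" and B: "B \<in> two_subsets ({1..n} - {p})"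
  have A_two: "A \<in> two_subsets {1..n}" and B_two: "B \<in> two_subsets {1..n}"
    using A B two_subsets_mono[of "{1..n} - {p}" "{1..n}"] by auto
  have "p \<notin> A" "p \<notin> B" using A B by (auto simp: two_subsets_def)
  obtain h where h: "h \<in> G" "h ` A = B"
    using assms(2) A_two B_two unfolding two_homogeneous_def by meson
  have h_perm: "h permutes {1..n}" using sym_subgroup_permutes[OF assms(1) h(1)] .
  have "h p \<in> {1..n} - B"
    using permutes_in_image[OF h_perm] permutes_image_notin[OF h_perm \<open>p \<notin> A\<close>] h(2) assms(4)
    by auto
  moreover have "p \<in> {1..n} - B" using assms(4) \<open>p \<notin> B\<close> by simp
  ultimately obtain k where k: "k \<in> G" "k ` B = B" "k (h p) = p"
    using assms(3) B_two by meson
  have "k \<circ> h \<in> G" using sym_subgroup_comp_closed[OF assms(1) k(1) h(1)] .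
  moreover have "(k \<circ> h) p = p" "(k \<circ> h) ` A = B" using k h(2) by (auto simp: image_comp)
  ultimately show "\<exists>g\<in>G. g p = p \<and> g ` A = B" by blast
qed

end
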